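(* Let $T\in D(\nu)$ and $\lambda_1\in\mathcal P$. Then $\lambda(\lambda_1),\alpha(\lambda_1)\in\mathcal P^k$ and $T\in\underline{\mathrm{CLR}}^{\lambda(\lambda_1)}_{\alpha(\lambda_1),\nu}$ if and only if $\lambda_1\ge\lambda_{\min}(T)$.
   Context: Identify a partition $\lambda=(a_1\ge a_2\ge\cdots)$ with $\sum_ja_j\epsilon_j$ in $\Lambda=\bigoplus_{j\ge1}\mathbb Z\epsilon_j$; put $\omega_i=\epsilon_1+\dots+\epsilon_i$; partitions are exactly elements of $\Lambda$ with all $\omega$-coordinates $\ge0$. For $x,y\in\Lambda$, $y\le x$ means $x-y$ has all $\omega$-coordinates $\ge0$. $\mathcal P$ = partitions, $\mathcal P^k$ = $k$-tuples of partitions. $SST(\nu)$ = semistandard tableaux of shape $\nu$ with entries in $\mathbb Z_{>0}$, with the standard $\mathfrak{gl}_\infty$-crystal structure (operators $\tilde e_i$). For $T\in SST(\nu)$: $\mathrm{wt}(T)=\sum_j(\#\text{entries }j)\epsilon_j$, $\varepsilon_i(T)=\max\{m\ge0:\tilde e_i^mT\ne0\}$, $\varepsilon(T)=\sum_i\varepsilon_i(T)\omega_i$. $\mathrm{CLR}^\lambda_{\alpha,\nu}=\{T\in SST(\nu):\varepsilon(T)\le\alpha,\ \alpha+\mathrm{wt}(T)=\lambda\}$. Fix $k\ge1$ and partitions $\nu=(\nu_1^+,\nu_1^-,\dots,\nu_k^+,\nu_k^-)$; indices cyclic mod $k$ ($\lambda_0:=\lambda_k$). $\underline{SST}(\nu)=\prod_iSST(\nu_i^+)\times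 SST(\nu_i^-)$, elements $T=(T_1^+,T_1^-,\dots,T_k^+,T_k^-)$, $T_i=(T_i^+,T_i^-)$, $\mathrm{wt}(T_i)=\mathrm{wt}(T_i^+)-\mathrm{wt}(T_i^-)$. $\underline{\mathrm{CLR}}^\lambda_{\alpha,\nu}=\prod_{i=1}^k\mathrm{CLR}^{\lambda_i}_{\alpha_i,\nu_i^+}\times\mathrm{CLR}^{\lambda_{i-1}}_{\alpha_i,\nu_i^-}$ for $\lambda,\alpha\in\mathcal P^k$. $T$ is distinguished if it lies in some $\underline{\mathrm{CLR}}^\lambda_{\alpha,\nu}$; $D(\nu)$ is the set of distinguished $T$ (equivalently those with $\sum_j\mathrm{wt}(T_j)=0$). For $T\in\underline{SST}(\nu)$ and $\lambda_1\in\mathcal P$, $\lambda(\lambda_1)=(\lambda_1,\dots,\lambda_k)$ and $\alpha(\lambda_1)=(\alpha_1,\dots,\alpha_k)$ are the elements of $\Lambda^k$ given by $\lambda_i=\lambda_1+\sum_{j=2}^i\mathrm{wt}(T_j)$, $\alpha_i=\lambda_1-\mathrm{wt}(T_i^+)+\sum_{j=2}^i\mathrm{wt}(T_j)$. For $T\in D(\nu)$, $\lambda_{\min}(T)\in\Lambda$ is the least upper bound with respect to $\le$ (coordinatewise maximum of $\omega$-coordinates) of the $2k$ elements $S_i^\pm=\varepsilon(T_i^\pm)+\mathrm{wt}(T_i^+)-\sum_{j=2}^i\mathrm{wt}(T_j)$, $i=1,\dots,k$; it is a partition. *)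

theory Defs
  imports Main
begin

text \<open>Elements of Lambda = direct sum of Z eps_j (j >= 1) are functions nat => int,
  index j stands for eps_j; index 0 is unused (forced to be 0).\<close>

type_synonym lam = "nat \<Rightarrow> int"
text \<open>Tableaux: list of rows (top to bottom, English convention), each row a list of entries.\<close>
type_synonym tab = "nat list list"

definition in_Lambda :: "lam \<Rightarrow> bool" where
  "in_Lambda x \<longleftrightarrow> x 0 = 0 \<and> finite {j. x j \<noteq> 0}"

text \<open>omega-coordinates: x = sum_i c_i omega_i with c_i = x_i - x_(i+1).\<close>
definition omega_coord :: "lam \<Rightarrow> nat \<Rightarrow> int" where
  "omega_coord x i = (if i = 0 then 0 else x i - x (Suc i))"

definition omega_le :: "lam \<Rightarrow> lam \<Rightarrow> bool" where
  "omega_le y x \<longleftrightarrow> (\<forall>i\<ge>1. omega_coord (\<lambda>j. x j - y j) i \<ge> 0)"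

definition is_part :: "lam \<Rightarrow> bool" where
  "is_part x \<longleftrightarrow> in_Lambda x \<and> (\<forall>i\<ge>1. omega_coord x i \<ge> 0)"

definition SST :: "lam \<Rightarrow> tab \<Rightarrow> bool" where
  "SST nu T \<longleftrightarrow>
     (\<forall>r. nu (Suc r) = (if r < length T then int (length (T ! r)) else 0))
   \<and> (\<forall>r<length T. T ! r \<noteq> [])
   \<and> (\<forall>r<length T. \<forall>c<length (T ! r). 0 < T ! r ! c)
   \<and> (\<forall>r<length T. sorted (T ! r))
   \<and> (\<forall>r c. Suc r < length T \<and> c < length (T ! Suc r) \<longrightarrow> T ! r ! c < T ! Suc r ! c)"

definition read_word :: "tab \<Rightarrow> nat list" where
  "read_word T = concat (rev T)"

text \<open>Signature (bracket) rule for e_i on words: letter i+1 is an opening bracket,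
  letter i a closing bracket; e_i changes the leftmost unmatched i+1 into i.\<close>
definition bal :: "nat \<Rightarrow> nat list \<Rightarrow> nat \<Rightarrow> nat \<Rightarrow> int" where
  "bal i w p q = int (count_list (take (Suc q - p) (drop p w)) (Suc i))
                - int (count_list (take (Suc q - p) (drop p w)) i)"

definition unmatched :: "nat \<Rightarrow> nat list \<Rightarrow> nat \<Rightarrow> bool" where
  "unmatched i w p \<longleftrightarrow> p < length w \<and> w ! p = Suc i
     \<and> (\<forall>q. p \<le> q \<and> q < length w \<longrightarrow> 0 < bal i w p q)"

definition e_word :: "nat \<Rightarrow> nat list \<Rightarrow> nat list option" where
  "e_word i w = (if \<exists>p. unmatched i w p
                 then Some (w[(LEAST p. unmatched i w p) := i]) else None)"

fun split_rows :: "nat list \<Rightarrow> 'a list \<Rightarrow> 'a list list" where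
  "split_rows [] w = []"
| "split_rows (n # ns) w = take n w # split_rows ns (drop n w)"

text \<open>Crystal operator e_i on tableaux (None represents 0).\<close>
definition e_tab :: "nat \<Rightarrow> tab \<Rightarrow> tab option" where
  "e_tab i T = map_option (\<lambda>w. rev (split_rows (map length (rev T)) w)) (e_word i (read_word T))"

primrec e_pow :: "nat \<Rightarrow> nat \<Rightarrow> tab \<Rightarrow> tab option" where
  "e_pow i 0 T = Some T"
| "e_pow i (Suc m) T = Option.bind (e_pow i m T) (e_tab i)"

definition eps_i :: "nat \<Rightarrow> tab \<Rightarrow> nat" where
  "eps_i i T = (GREATEST m. e_pow i m T \<noteq> None)"

text \<open>eps(T) = sum_{i>=1} eps_i(T) omega_i, in eps-coordinates.\<close>
definition eps_vec :: "tab \<Rightarrow> lam" where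
  "eps_vec T j = (if j = 0 then 0 else int (\<Sum>i\<in>{i. j \<le> i \<and> eps_i i T \<noteq> 0}. eps_i i T))"

definition wt :: "tab \<Rightarrow> lam" where
  "wt T j = (if j = 0 then 0 else int (count_list (concat T) j))"

definition CLR :: "lam \<Rightarrow> lam \<Rightarrow> lam \<Rightarrow> tab set" where
  "CLR la al nu = {T. SST nu T \<and> omega_le (eps_vec T) al \<and> (\<forall>j. al j + wt T j = la j)}"

text \<open>k-tuples indexed by 1..k, cyclic predecessor.\<close>
definition prevk :: "nat \<Rightarrow> nat \<Rightarrow> nat" where
  "prevk k i = (if i = 1 then k else i - 1)"

definition is_part_k :: "nat \<Rightarrow> (nat \<Rightarrow> lam) \<Rightarrow> bool" where
  "is_part_k k x \<longleftrightarrow> (\<forall>i\<in>{1..k}. is_part (x i))"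

definition uSST :: "nat \<Rightarrow> (nat \<Rightarrow> lam) \<Rightarrow> (nat \<Rightarrow> lam) \<Rightarrow> (nat \<Rightarrow> tab) \<Rightarrow> (nat \<Rightarrow> tab) \<Rightarrow> bool" where
  "uSST k nup num Tp Tm \<longleftrightarrow> (\<forall>i\<in>{1..k}. SST (nup i) (Tp i) \<and> SST (num i) (Tm i))"

definition uCLR :: "nat \<Rightarrow> (nat \<Rightarrow> lam) \<Rightarrow> (nat \<Rightarrow> lam) \<Rightarrow> (nat \<Rightarrow> lam) \<Rightarrow> (nat \<Rightarrow> lam)
                    \<Rightarrow> (nat \<Rightarrow> tab) \<Rightarrow> (nat \<Rightarrow> tab) \<Rightarrow> bool" where
  "uCLR k la al nup num Tp Tm \<longleftrightarrow>
     (\<forall>i\<in>{1..k}. Tp i \<in> CLR (la i) (al i) (nup i) \<and> Tm i \<in> CLR (la (prevk k i)) (al i) (num i))"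

definition distinguished :: "nat \<Rightarrow> (nat \<Rightarrow> lam) \<Rightarrow> (nat \<Rightarrow> lam) \<Rightarrow> (nat \<Rightarrow> tab) \<Rightarrow> (nat \<Rightarrow> tab) \<Rightarrow> bool" where
  "distinguished k nup num Tp Tm \<longleftrightarrow>
     (\<exists>la al. is_part_k k la \<and> is_part_k k al \<and> uCLR k la al nup num Tp Tm)"

definition wt_pair :: "(nat \<Rightarrow> tab) \<Rightarrow> (nat \<Rightarrow> tab) \<Rightarrow> nat \<Rightarrow> lam" where
  "wt_pair Tp Tm i j = wt (Tp i) j - wt (Tm i) j"

definition lam_of :: "(nat \<Rightarrow> tab) \<Rightarrow> (nat \<Rightarrow> tab) \<Rightarrow> lam \<Rightarrow> nat \<Rightarrow> lam" where
  "lam_of Tp Tm l1 i j = l1 j + (\<Sum>m\<in>{2..i}. wt_pair Tp Tm m j)"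

definition alpha_of :: "(nat \<Rightarrow> tab) \<Rightarrow> (nat \<Rightarrow> tab) \<Rightarrow> lam \<Rightarrow> nat \<Rightarrow> lam" where
  "alpha_of Tp Tm l1 i j = l1 j - wt (Tp i) j + (\<Sum>m\<in>{2..i}. wt_pair Tp Tm m j)"

definition S_plus :: "(nat \<Rightarrow> tab) \<Rightarrow> (nat \<Rightarrow> tab) \<Rightarrow> nat \<Rightarrow> lam" where
  "S_plus Tp Tm i j = eps_vec (Tp i) j + wt (Tp i) j - (\<Sum>m\<in>{2..i}. wt_pair Tp Tm m j)"

definition S_minus :: "(nat \<Rightarrow> tab) \<Rightarrow> (nat \<Rightarrow> tab) \<Rightarrow> nat \<Rightarrow> lam" where
  "S_minus Tp Tm i j = eps_vec (Tm i) j + wt (Tp i) j - (\<Sum>m\<in>{2..i}. wt_pair Tp Tm m j)"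

text \<open>Least upper bound: coordinatewise maximum of omega-coordinates of the 2k elements,
  converted back to eps-coordinates.\<close>
definition max_omega :: "nat \<Rightarrow> (nat \<Rightarrow> tab) \<Rightarrow> (nat \<Rightarrow> tab) \<Rightarrow> nat \<Rightarrow> int" where
  "max_omega k Tp Tm i = Max ((\<lambda>m. omega_coord (S_plus Tp Tm m) i) ` {1..k}
                             \<union> (\<lambda>m. omega_coord (S_minus Tp Tm m) i) ` {1..k})"

definition lambda_min :: "nat \<Rightarrow> (nat \<Rightarrow> tab) \<Rightarrow> (nat \<Rightarrow> tab) \<Rightarrow> lam" where
  "lambda_min k Tp Tm j = (if j = 0 then 0
      else (\<Sum>i\<in>{i. j \<le> i \<and> max_omega k Tp Tm i \<noteq> 0}. max_omega k Tp Tm i))"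

end

theory Submission
  imports Defs
begin

text \<open>Both sides of the equivalence are conditions on \<open>\<lambda>\<^sub>1\<close> alone. Any witness of
  distinguishedness telescopes around the cycle to \<open>\<Sum>\<^sub>j wt(T\<^sub>j) = 0\<close>, which makes the
  weight equations of \<open>CLR\<close> hold identically for \<open>\<lambda>(\<lambda>\<^sub>1)\<close>, \<open>\<alpha>(\<lambda>\<^sub>1)\<close>. Since
  \<open>\<alpha>\<^sub>i - \<epsilon>(T\<^sub>i\<^sup>\<plusminus>) = \<lambda>\<^sub>1 - S\<^sub>i\<^sup>\<plusminus>\<close>, the conditions \<open>\<epsilon>(T\<^sub>i\<^sup>\<plusminus>) \<le> \<alpha>\<^sub>i\<close> say
  \<open>S\<^sub>i\<^sup>\<plusminus> \<le> \<lambda>\<^sub>1\<close>, and together they say \<open>\<lambda>\<^sub>m\<^sub>i\<^sub>n(T) \<le> \<lambda>\<^sub>1\<close>. Under these conditions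
  \<open>\<alpha>\<^sub>i = (\<lambda>\<^sub>1 - S\<^sub>i\<^sup>+) + \<epsilon>(T\<^sub>i\<^sup>+)\<close> and \<open>\<lambda>\<^sub>i = (\<lambda>\<^sub>1 - S\<^sub>i\<^sup>+) + (\<epsilon> + wt)(T\<^sub>i\<^sup>+)\<close> are
  sums of partitions: the \<open>\<omega>\<^sub>i\<close>-coordinate of \<open>\<epsilon>(T) + wt(T)\<close> is
  \<open>\<epsilon>\<^sub>i(T) - #(i+1) + #i \<ge> 0\<close>, because by the signature rule \<open>e\<^sub>i\<close> can be applied at least as
  often as the maximal suffix excess of letters \<open>i+1\<close> over letters \<open>i\<close> in the reading word.\<close>

section \<open>The signature rule\<close>

definition suffix_balance :: "nat \<Rightarrow> nat list \<Rightarrow> nat \<Rightarrow> int" where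
  "suffix_balance i w t = int (count_list (drop t w) (Suc i)) - int (count_list (drop t w) i)"

lemma suffix_balance_step:
  "t < length w \<Longrightarrow> suffix_balance i w t =
     (if w ! t = Suc i then 1 else if w ! t = i then -1 else 0) + suffix_balance i w (Suc t)"
  unfolding suffix_balance_def by (simp add: Cons_nth_drop_Suc[symmetric])

lemma suffix_balance_beyond: "length w \<le> t \<Longrightarrow> suffix_balance i w t = 0"
  unfolding suffix_balance_def by simp

lemma suffix_balance_list_update: "p < t \<Longrightarrow> suffix_balance i (w[p := x]) t = suffix_balance i w t"
  unfolding suffix_balance_def by simp

lemma bal_eq_suffix_balance_diff:
  assumes "p \<le> q" "q < length w"
  shows "bal i w p q = suffix_balance i w p - suffix_balance i w (Suc q)"
proof -
  have "drop (Suc q - p) (drop p w) = drop (Suc q) w"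
    using assms by simp
  then have split: "drop p w = take (Suc q - p) (drop p w) @ drop (Suc q) w"
    by (metis append_take_drop_id)
  show ?thesis
    unfolding bal_def suffix_balance_def by (subst (3 4) split) simp
qed

lemma unmatched_if_suffix_balance_gt:
  assumes "t \<le> length w" "int m < suffix_balance i w t"
  obtains s where "unmatched i w s" "suffix_balance i w (Suc s) = int m"
proof -
  define S where "S = {t. t \<le> length w \<and> int m < suffix_balance i w t}"
  have "finite S" "t \<in> S"
    using assms unfolding S_def by auto
  define s where "s = Max S"
  have "s \<in> S"
    unfolding s_def using \<open>finite S\<close> \<open>t \<in> S\<close> Max_in by blast
  then have s_gt: "int m < suffix_balance i w s"
    unfolding S_def by simp
  have later_le: "suffix_balance i w t' \<le> int m" if "s < t'" "t' \<le> length w" for t'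
    using that Max_ge[OF \<open>finite S\<close>, of t'] unfolding s_def S_def by fastforce
  have s_len: "s < length w"
    using s_gt suffix_balance_beyond[of w s i] by fastforce
  have s_letter: "w ! s = Suc i" and s_next: "suffix_balance i w (Suc s) = int m"
    using suffix_balance_step[OF s_len, of i] s_gt later_le[of "Suc s"] s_len
    by (auto split: if_splits)
  have "unmatched i w s"
    unfolding unmatched_def
  proof (intro conjI allI impI)
    fix q assume "s \<le> q \<and> q < length w"
    then show "0 < bal i w s q"
      using bal_eq_suffix_balance_diff[of s q w i] later_le[of "Suc q"] s_gt by auto
  qed (use s_len s_letter in auto)
  then show thesis using s_next by (rule that)
qed

lemma count_list_update_self:
  "p < length w \<Longrightarrow> w ! p = y \<Longrightarrow> x \<noteq> y \<Longrightarrow> count_list (w[p := x]) y + 1 = count_list w y"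
proof (induction w arbitrary: p)
  case (Cons a w)
  then show ?case by (cases p) auto
qed simp

lemma e_word_SomeD:
  assumes "e_word i w = Some w'"
  shows "length w' = length w" "count_list w' (Suc i) + 1 = count_list w (Suc i)"
proof -
  have ex: "\<exists>p. unmatched i w p"
    using assms unfolding e_word_def by (auto split: if_splits)
  define p where "p = (LEAST p. unmatched i w p)"
  have "unmatched i w p"
    unfolding p_def using ex by (rule LeastI_ex)
  moreover have "w' = w[p := i]"
    using assms ex unfolding e_word_def p_def by auto
  ultimately show "length w' = length w" "count_list w' (Suc i) + 1 = count_list w (Suc i)"
    using count_list_update_self[of p w "Suc i" i] unfolding unmatched_def by auto
qed

text \<open>The leftmost unmatched letter lies weakly left of the one found by
  \<open>unmatched_if_suffix_balance_gt\<close>, so changing it lowers the maximal suffix balance by at most one.\<close>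
lemma e_word_suffix_balance:
  assumes "t \<le> length w" "int m < suffix_balance i w t"
  obtains w' t' where "e_word i w = Some w'" "t' \<le> length w'" "int m \<le> suffix_balance i w' t'"
proof -
  obtain s where s: "unmatched i w s" "suffix_balance i w (Suc s) = int m"
    using unmatched_if_suffix_balance_gt[OF assms] .
  then have ex: "\<exists>p. unmatched i w p" by blast
  define p where "p = (LEAST p. unmatched i w p)"
  have "p \<le> s"
    unfolding p_def using s(1) by (rule Least_le)
  have "unmatched i w p"
    unfolding p_def using ex by (rule LeastI_ex)
  have e: "e_word i w = Some (w[p := i])"
    using ex unfolding e_word_def p_def by auto
  show thesis
  proof (cases "p < s")
    case True
    have "suffix_balance i w s = 1 + int m"
      using s suffix_balance_step[of s w i] unfolding unmatched_def by simp
    then show thesis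
      using that[OF e, of s] suffix_balance_list_update[OF True] s(1)
      unfolding unmatched_def by simp
  next
    case False
    then show thesis
      using that[OF e, of "Suc s"] suffix_balance_list_update[of p "Suc s"] s \<open>p \<le> s\<close>
      unfolding unmatched_def by simp
  qed
qed

lemma concat_split_rows: "concat (split_rows ns w) = take (sum_list ns) w"
  by (induction ns arbitrary: w) (auto simp: take_add)

lemma read_word_e_tab: "map_option read_word (e_tab i T) = e_word i (read_word T)"
proof (cases "e_word i (read_word T)")
  case (Some w')
  have "sum_list (map length (rev T)) = length w'"
    using e_word_SomeD(1)[OF Some] unfolding read_word_def by (simp add: length_concat)
  then show ?thesis
    using Some unfolding e_tab_def read_word_def by (simp add: concat_split_rows)
qed (simp add: e_tab_def)

lemma e_pow_Suc_left: "e_pow i (Suc m) T = Option.bind (e_tab i T) (e_pow i m)"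
  by (induction m arbitrary: T) (simp_all split: Option.bind_split)

lemma e_pow_le_count: "e_pow i m T \<noteq> None \<Longrightarrow> m \<le> count_list (read_word T) (Suc i)"
proof (induction m arbitrary: T)
  case (Suc m)
  have "Option.bind (e_tab i T) (e_pow i m) \<noteq> None"
    using Suc.prems e_pow_Suc_left by metis
  then obtain T' where T': "e_tab i T = Some T'" "e_pow i m T' \<noteq> None"
    by (cases "e_tab i T") auto
  then have "e_word i (read_word T) = Some (read_word T')"
    using read_word_e_tab[of i T] by simp
  then show ?case
    using Suc.IH[OF T'(2)] e_word_SomeD(2) by fastforce
qed simp

lemma e_pow_if_suffix_balance:
  "t \<le> length (read_word T) \<Longrightarrow> int m \<le> suffix_balance i (read_word T) t \<Longrightarrow> e_pow i m T \<noteq> None"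
proof (induction m arbitrary: T t)
  case (Suc m)
  then have "int m < suffix_balance i (read_word T) t"
    by simp
  then obtain w' t' where w': "e_word i (read_word T) = Some w'" "t' \<le> length w'"
      "int m \<le> suffix_balance i w' t'"
    using e_word_suffix_balance[OF Suc.prems(1)] by blast
  then obtain T' where "e_tab i T = Some T'" "read_word T' = w'"
    using read_word_e_tab[of i T] by (cases "e_tab i T") auto
  then show ?case
    using Suc.IH[of t' T'] w' by (simp add: e_pow_Suc_left del: e_pow.simps(2))
qed simp

lemma eps_i_le_count: "eps_i i T \<le> count_list (read_word T) (Suc i)"
proof -
  have "e_pow i (eps_i i T) T \<noteq> None"
    unfolding eps_i_def
    by (rule GreatestI_nat[where k = 0 and b = "count_list (read_word T) (Suc i)"])
      (auto intro: e_pow_le_count)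
  then show ?thesis by (rule e_pow_le_count)
qed

lemma le_eps_i: "e_pow i m T \<noteq> None \<Longrightarrow> m \<le> eps_i i T"
  unfolding eps_i_def
  by (rule Greatest_le_nat[where b = "count_list (read_word T) (Suc i)"]) (auto intro: e_pow_le_count)

lemma count_diff_le_eps_i:
  "int (count_list (concat T) (Suc i)) - int (count_list (concat T) i) \<le> int (eps_i i T)"
proof -
  define b where "b = suffix_balance i (read_word T) 0"
  have balance: "b = int (count_list (concat T) (Suc i)) - int (count_list (concat T) i)"
    unfolding b_def suffix_balance_def read_word_def by (simp add: count_list_concat rev_map[symmetric])
  show ?thesis
  proof (cases "b \<le> 0")
    case False
    then have "e_pow i (nat b) T \<noteq> None"
      by (intro e_pow_if_suffix_balance[of 0]) (simp_all add: b_def)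
    then show ?thesis
      using le_eps_i[of i "nat b" T] balance False by simp
  qed (use balance in simp)
qed

lemma finite_eps_i_support: "finite {i. eps_i i T \<noteq> 0}"
proof (rule finite_subset)
  show "{i. eps_i i T \<noteq> 0} \<subseteq> Suc -` set (read_word T)"
  proof
    fix i assume "i \<in> {i. eps_i i T \<noteq> 0}"
    then have "count_list (read_word T) (Suc i) \<noteq> 0"
      using eps_i_le_count[of i T] by auto
    then show "i \<in> Suc -` set (read_word T)"
      by (simp add: count_list_0_iff)
  qed
qed (rule finite_vimageI; simp)

section \<open>Elements of \<open>\<Lambda>\<close> and partitions\<close>

definition omega_combination :: "(nat \<Rightarrow> int) \<Rightarrow> lam" where
  "omega_combination c j = (if j = 0 then 0 else \<Sum>i\<in>{i. j \<le> i \<and> c i \<noteq> 0}. c i)"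

lemma eps_vec_eq_omega_combination: "eps_vec T = omega_combination (\<lambda>i. int (eps_i i T))"
  unfolding eps_vec_def omega_combination_def by (simp add: fun_eq_iff)

lemma lambda_min_eq_omega_combination: "lambda_min k Tp Tm = omega_combination (max_omega k Tp Tm)"
  unfolding lambda_min_def omega_combination_def by (simp add: fun_eq_iff)

lemma omega_coord_omega_combination:
  assumes "finite {i. c i \<noteq> 0}" "1 \<le> i"
  shows "omega_coord (omega_combination c) i = c i"
proof -
  have tail: "finite {x. Suc i \<le> x \<and> c x \<noteq> 0}"
    by (rule finite_subset[OF _ assms(1)]) auto
  have "{x. i \<le> x \<and> c x \<noteq> 0} = (if c i = 0 then {} else {i}) \<union> {x. Suc i \<le> x \<and> c x \<noteq> 0}"
    by (auto simp: Suc_le_eq le_less)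
  then show ?thesis
    using assms(2) tail unfolding omega_coord_def omega_combination_def by (simp add: sum.union_disjoint)
qed

lemma in_Lambda_omega_combination:
  assumes "finite {i. c i \<noteq> 0}"
  shows "in_Lambda (omega_combination c)"
  unfolding in_Lambda_def
proof
  show "omega_combination c 0 = 0"
    by (simp add: omega_combination_def)
  have "{j. omega_combination c j \<noteq> 0} \<subseteq> (\<Union>i\<in>{i. c i \<noteq> 0}. {..i})"
  proof
    fix j assume "j \<in> {j. omega_combination c j \<noteq> 0}"
    then have "{i. j \<le> i \<and> c i \<noteq> 0} \<noteq> {}"
      unfolding omega_combination_def by (cases "j = 0") (auto simp del: Collect_empty_eq)
    then show "j \<in> (\<Union>i\<in>{i. c i \<noteq> 0}. {..i})"
      by auto
  qed
  moreover have "finite (\<Union>i\<in>{i. c i \<noteq> 0}. {..i})"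
    using assms by simp
  ultimately show "finite {j. omega_combination c j \<noteq> 0}"
    by (rule finite_subset)
qed

lemma in_Lambda_add: "in_Lambda x \<Longrightarrow> in_Lambda y \<Longrightarrow> in_Lambda (\<lambda>j. x j + y j)"
  unfolding in_Lambda_def by (auto intro: finite_subset[of _ "{j. x j \<noteq> 0} \<union> {j. y j \<noteq> 0}"])

lemma in_Lambda_diff: "in_Lambda x \<Longrightarrow> in_Lambda y \<Longrightarrow> in_Lambda (\<lambda>j. x j - y j)"
  unfolding in_Lambda_def by (auto intro: finite_subset[of _ "{j. x j \<noteq> 0} \<union> {j. y j \<noteq> 0}"])

lemma in_Lambda_sum:
  assumes "finite I" "\<And>m. m \<in> I \<Longrightarrow> in_Lambda (f m)"
  shows "in_Lambda (\<lambda>j. \<Sum>m\<in>I. f m j)"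
  using assms
proof (induction I rule: finite_induct)
  case (insert m I)
  then show ?case
    using in_Lambda_add[of "f m" "\<lambda>j. \<Sum>m\<in>I. f m j"] by simp
qed (simp add: in_Lambda_def)

lemma in_Lambda_wt: "in_Lambda (wt T)"
  unfolding in_Lambda_def
proof
  show "finite {j. wt T j \<noteq> 0}"
    by (rule finite_subset[of _ "set (concat T)"]) (auto simp: wt_def count_list_0_iff split: if_splits)
qed (simp add: wt_def)

lemma finite_omega_coord_support:
  assumes "in_Lambda x"
  shows "finite {i. omega_coord x i \<noteq> 0}"
proof -
  have "finite {j. x j \<noteq> 0}"
    using assms by (simp add: in_Lambda_def)
  moreover have "{i. omega_coord x i \<noteq> 0} \<subseteq> {j. x j \<noteq> 0} \<union> Suc -` {j. x j \<noteq> 0}"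
    by (auto simp: omega_coord_def)
  ultimately show ?thesis
    by (meson finite_UnI finite_subset finite_vimageI inj_Suc)
qed

lemma omega_le_iff: "omega_le y x \<longleftrightarrow> (\<forall>i\<ge>1. omega_coord y i \<le> omega_coord x i)"
  unfolding omega_le_def omega_coord_def by auto

lemma omega_le_cong: "(\<And>j. x j - y j = x' j - y' j) \<Longrightarrow> omega_le y x \<longleftrightarrow> omega_le y' x'"
  unfolding omega_le_def by simp

lemma is_part_add: "is_part x \<Longrightarrow> is_part y \<Longrightarrow> is_part (\<lambda>j. x j + y j)"
  unfolding is_part_def by (simp add: in_Lambda_add omega_coord_def) (meson add_mono)

lemma is_part_diff: "in_Lambda x \<Longrightarrow> in_Lambda y \<Longrightarrow> omega_le y x \<Longrightarrow> is_part (\<lambda>j. x j - y j)"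
  unfolding is_part_def omega_le_def by (simp add: in_Lambda_diff)

lemma is_part_eps_vec: "is_part (eps_vec T)"
  unfolding is_part_def eps_vec_eq_omega_combination
  using finite_eps_i_support[of T]
  by (simp add: in_Lambda_omega_combination omega_coord_omega_combination)

lemma is_part_eps_vec_plus_wt: "is_part (\<lambda>j. eps_vec T j + wt T j)"
  unfolding is_part_def
proof (intro conjI allI impI)
  show "in_Lambda (\<lambda>j. eps_vec T j + wt T j)"
    using is_part_eps_vec[of T] in_Lambda_wt by (simp add: is_part_def in_Lambda_add)
  fix i :: nat assume "1 \<le> i"
  then have "omega_coord (eps_vec T) i = int (eps_i i T)"
    using finite_eps_i_support[of T]
    by (simp add: eps_vec_eq_omega_combination omega_coord_omega_combination)
  then show "0 \<le> omega_coord (\<lambda>j. eps_vec T j + wt T j) i"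
    using \<open>1 \<le> i\<close> count_diff_le_eps_i[of T i] by (simp add: omega_coord_def wt_def)
qed

section \<open>The cyclic system of tableaux\<close>

lemma in_Lambda_eps_vec: "in_Lambda (eps_vec T)"
  using is_part_eps_vec by (simp add: is_part_def)

lemma in_Lambda_wt_pair_sum: "in_Lambda (\<lambda>j. \<Sum>m\<in>I. wt_pair Tp Tm m j)" if "finite I"
  using that by (rule in_Lambda_sum) (simp add: wt_pair_def[abs_def] in_Lambda_diff in_Lambda_wt)

lemma in_Lambda_S_plus: "in_Lambda (S_plus Tp Tm i)"
proof -
  have "S_plus Tp Tm i = (\<lambda>j. (eps_vec (Tp i) j + wt (Tp i) j) - (\<Sum>m\<in>{2..i}. wt_pair Tp Tm m j))"
    by (simp add: fun_eq_iff S_plus_def)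
  then show ?thesis
    by (simp add: in_Lambda_diff in_Lambda_add in_Lambda_eps_vec in_Lambda_wt in_Lambda_wt_pair_sum)
qed

lemma in_Lambda_S_minus: "in_Lambda (S_minus Tp Tm i)"
proof -
  have "S_minus Tp Tm i = (\<lambda>j. (eps_vec (Tm i) j + wt (Tp i) j) - (\<Sum>m\<in>{2..i}. wt_pair Tp Tm m j))"
    by (simp add: fun_eq_iff S_minus_def)
  then show ?thesis
    by (simp add: in_Lambda_diff in_Lambda_add in_Lambda_eps_vec in_Lambda_wt in_Lambda_wt_pair_sum)
qed

lemma max_omega_le_iff:
  "1 \<le> k \<Longrightarrow> max_omega k Tp Tm i \<le> c \<longleftrightarrow>
     (\<forall>m\<in>{1..k}. omega_coord (S_plus Tp Tm m) i \<le> c \<and> omega_coord (S_minus Tp Tm m) i \<le> c)"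
  unfolding max_omega_def by (subst Max_le_iff) auto

lemma max_omega_mem:
  assumes "1 \<le> k"
  shows "\<exists>m\<in>{1..k}. max_omega k Tp Tm i \<in> {omega_coord (S_plus Tp Tm m) i, omega_coord (S_minus Tp Tm m) i}"
proof -
  have "max_omega k Tp Tm i \<in> (\<lambda>m. omega_coord (S_plus Tp Tm m) i) ` {1..k}
                             \<union> (\<lambda>m. omega_coord (S_minus Tp Tm m) i) ` {1..k}"
    unfolding max_omega_def by (rule Max_in) (use assms in auto)
  then show ?thesis
    by blast
qed

lemma finite_max_omega_support:
  assumes "1 \<le> k"
  shows "finite {i. max_omega k Tp Tm i \<noteq> 0}"
proof (rule finite_subset)
  show "{i. max_omega k Tp Tm i \<noteq> 0} \<subseteq>
      (\<Union>m\<in>{1..k}. {i. omega_coord (S_plus Tp Tm m) i \<noteq> 0} \<union> {i. omega_coord (S_minus Tp Tm m) i \<noteq> 0})"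
  proof
    fix i assume "i \<in> {i. max_omega k Tp Tm i \<noteq> 0}"
    moreover obtain m where "m \<in> {1..k}"
      "max_omega k Tp Tm i \<in> {omega_coord (S_plus Tp Tm m) i, omega_coord (S_minus Tp Tm m) i}"
      using max_omega_mem[OF assms] by blast
    ultimately show "i \<in> (\<Union>m\<in>{1..k}. {i. omega_coord (S_plus Tp Tm m) i \<noteq> 0}
                                   \<union> {i. omega_coord (S_minus Tp Tm m) i \<noteq> 0})"
      by auto
  qed
  show "finite (\<Union>m\<in>{1..k}. {i. omega_coord (S_plus Tp Tm m) i \<noteq> 0} \<union> {i. omega_coord (S_minus Tp Tm m) i \<noteq> 0})"
    by (simp add: finite_omega_coord_support in_Lambda_S_plus in_Lambda_S_minus)
qed

lemma omega_le_lambda_min_iff: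
  assumes "1 \<le> k"
  shows "omega_le (lambda_min k Tp Tm) l \<longleftrightarrow>
    (\<forall>m\<in>{1..k}. omega_le (S_plus Tp Tm m) l \<and> omega_le (S_minus Tp Tm m) l)"
proof -
  have "omega_coord (lambda_min k Tp Tm) i = max_omega k Tp Tm i" if "1 \<le> i" for i
    using finite_max_omega_support[OF assms] that
    by (simp add: lambda_min_eq_omega_combination omega_coord_omega_combination)
  then have "omega_le (lambda_min k Tp Tm) l \<longleftrightarrow> (\<forall>i\<ge>1. max_omega k Tp Tm i \<le> omega_coord l i)"
    unfolding omega_le_iff by simp
  also have "\<dots> \<longleftrightarrow> (\<forall>i\<ge>1. \<forall>m\<in>{1..k}.
      omega_coord (S_plus Tp Tm m) i \<le> omega_coord l i \<and> omega_coord (S_minus Tp Tm m) i \<le> omega_coord l i)"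
    using max_omega_le_iff[OF assms] by simp
  also have "\<dots> \<longleftrightarrow> (\<forall>m\<in>{1..k}. omega_le (S_plus Tp Tm m) l \<and> omega_le (S_minus Tp Tm m) l)"
    unfolding omega_le_iff by blast
  finally show ?thesis .
qed

lemma sum_prevk: "(\<Sum>m\<in>{1..k}. f (prevk k m)) = (\<Sum>m\<in>{1..k}. f m)"
proof (rule sum.reindex_bij_betw)
  have "{1..k} \<subseteq> prevk k ` {1..k}"
  proof
    fix j assume "j \<in> {1..k}"
    then have "j = prevk k (if j = k then 1 else Suc j)" "(if j = k then 1 else Suc j) \<in> {1..k}"
      by (auto simp: prevk_def)
    then show "j \<in> prevk k ` {1..k}"
      by blast
  qed
  moreover have "prevk k ` {1..k} \<subseteq> {1..k}" "inj_on (prevk k) {1..k}"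
    by (auto simp: prevk_def inj_on_def)
  ultimately show "bij_betw (prevk k) {1..k} {1..k}"
    by (simp add: bij_betw_def)
qed

lemma wt_pair_sum_eq_0_if_uCLR:
  assumes "uCLR k la al nup num Tp Tm"
  shows "(\<Sum>m\<in>{1..k}. wt_pair Tp Tm m j) = 0"
proof -
  have "wt_pair Tp Tm m j = la m j - la (prevk k m) j" if "m \<in> {1..k}" for m
  proof -
    have "al m j + wt (Tp m) j = la m j" "al m j + wt (Tm m) j = la (prevk k m) j"
      using assms that unfolding uCLR_def CLR_def by auto
    then show ?thesis
      unfolding wt_pair_def by simp
  qed
  then have "(\<Sum>m\<in>{1..k}. wt_pair Tp Tm m j) = (\<Sum>m\<in>{1..k}. la m j) - (\<Sum>m\<in>{1..k}. la (prevk k m) j)"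
    by (simp add: sum_subtractf)
  then show ?thesis
    using sum_prevk[of "\<lambda>m. la m j" k] by simp
qed

lemma lam_of_eq_lam_of_prevk:
  assumes "(\<Sum>m\<in>{1..k}. wt_pair Tp Tm m j) = 0" "i \<in> {1..k}"
  shows "lam_of Tp Tm l i j = lam_of Tp Tm l (prevk k i) j + wt_pair Tp Tm i j"
proof (cases "i = 1")
  case True
  then have "{1..k} = insert 1 {2..k}"
    using assms(2) by auto
  then show ?thesis
    using assms(1) True unfolding lam_of_def prevk_def by simp
next
  case False
  then have "{2..i} = insert i {2..i - 1}" "i \<notin> {2..i - 1}"
    using assms(2) by auto
  then have "(\<Sum>m\<in>{2..i}. wt_pair Tp Tm m j) = wt_pair Tp Tm i j + (\<Sum>m\<in>{2..i - 1}. wt_pair Tp Tm m j)"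
    by simp
  then show ?thesis
    using False unfolding lam_of_def prevk_def by simp
qed

lemma uCLR_lam_of_alpha_of_iff:
  assumes "\<And>j. (\<Sum>m\<in>{1..k}. wt_pair Tp Tm m j) = 0"
    and "\<forall>i\<in>{1..k}. SST (nup i) (Tp i) \<and> SST (num i) (Tm i)"
  shows "uCLR k (lam_of Tp Tm l) (alpha_of Tp Tm l) nup num Tp Tm \<longleftrightarrow>
    (\<forall>m\<in>{1..k}. omega_le (S_plus Tp Tm m) l \<and> omega_le (S_minus Tp Tm m) l)"
proof -
  have "alpha_of Tp Tm l i j + wt (Tp i) j = lam_of Tp Tm l i j" for i j
    unfolding alpha_of_def lam_of_def by simp
  moreover have "alpha_of Tp Tm l i j + wt (Tm i) j = lam_of Tp Tm l (prevk k i) j" if "i \<in> {1..k}" for i j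
    using lam_of_eq_lam_of_prevk[OF assms(1) that, of l] unfolding alpha_of_def lam_of_def wt_pair_def
    by simp
  moreover have "omega_le (eps_vec (Tp i)) (alpha_of Tp Tm l i) \<longleftrightarrow> omega_le (S_plus Tp Tm i) l" for i
    by (rule omega_le_cong) (simp add: alpha_of_def S_plus_def)
  moreover have "omega_le (eps_vec (Tm i)) (alpha_of Tp Tm l i) \<longleftrightarrow> omega_le (S_minus Tp Tm i) l" for i
    by (rule omega_le_cong) (simp add: alpha_of_def S_minus_def)
  ultimately show ?thesis
    using assms(2) unfolding uCLR_def CLR_def by auto
qed

lemma is_part_alpha_of_lam_of:
  assumes "in_Lambda l" "omega_le (S_plus Tp Tm i) l"
  shows "is_part (alpha_of Tp Tm l i)" "is_part (lam_of Tp Tm l i)"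
proof -
  have base: "is_part (\<lambda>j. l j - S_plus Tp Tm i j)"
    using assms(1) in_Lambda_S_plus assms(2) by (rule is_part_diff)
  have "alpha_of Tp Tm l i = (\<lambda>j. (l j - S_plus Tp Tm i j) + eps_vec (Tp i) j)"
    by (simp add: fun_eq_iff alpha_of_def S_plus_def)
  then show "is_part (alpha_of Tp Tm l i)"
    using is_part_add[OF base is_part_eps_vec] by simp
  have "lam_of Tp Tm l i = (\<lambda>j. (l j - S_plus Tp Tm i j) + (eps_vec (Tp i) j + wt (Tp i) j))"
    by (simp add: fun_eq_iff lam_of_def S_plus_def)
  then show "is_part (lam_of Tp Tm l i)"
    using is_part_add[OF base is_part_eps_vec_plus_wt] by simp
qed

theorem mainTheorem9:
  fixes k :: nat and nup num :: "nat \<Rightarrow> lam" and Tp Tm :: "nat \<Rightarrow> tab" and l1 :: lam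
  assumes "1 \<le> k"
    and "\<forall>i\<in>{1..k}. is_part (nup i) \<and> is_part (num i)"
    and "distinguished k nup num Tp Tm"
    and "is_part l1"
  shows "(is_part_k k (lam_of Tp Tm l1) \<and> is_part_k k (alpha_of Tp Tm l1)
          \<and> uCLR k (lam_of Tp Tm l1) (alpha_of Tp Tm l1) nup num Tp Tm)
         \<longleftrightarrow> omega_le (lambda_min k Tp Tm) l1"
proof -
  obtain la al where witness: "uCLR k la al nup num Tp Tm"
    using assms(3) unfolding distinguished_def by blast
  then have "\<forall>i\<in>{1..k}. SST (nup i) (Tp i) \<and> SST (num i) (Tm i)"
    unfolding uCLR_def CLR_def by blast
  with wt_pair_sum_eq_0_if_uCLR[OF witness]
  have clr: "uCLR k (lam_of Tp Tm l1) (alpha_of Tp Tm l1) nup num Tp Tm \<longleftrightarrow>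
      (\<forall>m\<in>{1..k}. omega_le (S_plus Tp Tm m) l1 \<and> omega_le (S_minus Tp Tm m) l1)"
    by (rule uCLR_lam_of_alpha_of_iff)
  have "in_Lambda l1"
    using assms(4) by (simp add: is_part_def)
  then have "\<forall>m\<in>{1..k}. omega_le (S_plus Tp Tm m) l1 \<Longrightarrow>
      is_part_k k (lam_of Tp Tm l1) \<and> is_part_k k (alpha_of Tp Tm l1)"
    by (simp add: is_part_k_def is_part_alpha_of_lam_of)
  then show ?thesis
    using clr omega_le_lambda_min_iff[OF assms(1)] by blast
qed

end
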